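(* Let $(W,S)$ be a Coxeter system of finite rank and $S'$ another set of Coxeter generators of $W$ with $S'\subseteq S^W$. Let $A\subseteq S$ be an irreducible simplex, let $A',\bar A'\subseteq S'$ be irreducible simplices, and let $u,\bar u\in W$ satisfy $\langle A\rangle=u\langle A'\rangle u^{-1}=\bar u\langle\bar A'\rangle\bar u^{-1}$. Let $\alpha:(\langle A\rangle,A)\to(\langle A'\rangle,A')$ and $\bar\alpha:(\langle A\rangle,A)\to(\langle\bar A'\rangle,\bar A')$ be isomorphisms. Then $u_*\alpha:\langle A\rangle\to\langle A\rangle$ is an inner-by-graph automorphism of $(\langle A\rangle,A)$ if and only if $\bar u_*\bar\alpha:\langle A\rangle\to\langle A\rangle$ is an inner-by-graph automorphism of $(\langle A\rangle,A)$.
   Context: Coxeter system $(W,S)$: $W=\langle S\mid (st)^{m(s,t)}\ (m(s,t)<\infty)\rangle$, $m(s,s)=1$, $m(s,t)=m(t,s)\in\{2,\dots,\infty\}$. $S^W=\{wsw^{-1}\}$. A simplex is $A\subseteq S$ with all $m(s,t)<\infty$; $A$ is irreducible if the graph on $A$ with edges $m(s,t)\ge3$ is connected. An isomorphism $(\langle A\rangle,A)\to(\langle A'\rangle,A')$ is a group isomorphism mapping $A$ onto $A'$. $u_*$ is $w\mapsto uwu^{-1}$. Inner-by-graph automorphism of $(\langle A\rangle,A)$: composite of an inner automorphism of $\langle A\rangle$ and an automorphism mapping $A$ onto $A$. *)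

theory Defs
  imports "HOL-Algebra.Algebra"
begin

definition word_prod :: "('a, 'b) monoid_scheme \<Rightarrow> 'a list \<Rightarrow> 'a" where
  "word_prod G w = foldr (\<lambda>x y. x \<otimes>\<^bsub>G\<^esub> y) w \<one>\<^bsub>G\<^esub>"

text \<open>Coxeter matrix entry m(s,t) = order of st in G (0 encodes infinity).\<close>
definition cox_m :: "('a, 'b) monoid_scheme \<Rightarrow> 'a \<Rightarrow> 'a \<Rightarrow> nat" where
  "cox_m G s t = group.ord G (s \<otimes>\<^bsub>G\<^esub> t)"

text \<open>Relator words (st)^{m(s,t)} for m(s,t) finite (including s^2 for s = t).\<close>
definition cox_relators :: "('a, 'b) monoid_scheme \<Rightarrow> 'a set \<Rightarrow> 'a list set" where
  "cox_relators G S = {concat (replicate (cox_m G s t) [s, t]) | s t. s \<in> S \<and> t \<in> S \<and> cox_m G s t \<noteq> 0}"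

definition cox_move :: "('a, 'b) monoid_scheme \<Rightarrow> 'a set \<Rightarrow> 'a list \<Rightarrow> 'a list \<Rightarrow> bool" where
  "cox_move G S v w \<longleftrightarrow> (\<exists>x y r. r \<in> cox_relators G S \<and>
      ((v = x @ r @ y \<and> w = x @ y) \<or> (v = x @ y \<and> w = x @ r @ y)))"

text \<open>(G,S) is a Coxeter system: S is a set of involutions generating G, and G is presented
  by S with the relations s^2 = 1, (st)^{m(s,t)} = 1 (m(s,t) finite): every word in S
  representing 1 is reducible to the empty word by the defining relations.\<close>
definition coxeter_system :: "('a, 'b) monoid_scheme \<Rightarrow> 'a set \<Rightarrow> bool" where
  "coxeter_system G S \<longleftrightarrow> group G \<and> S \<subseteq> carrier G \<and> \<one>\<^bsub>G\<^esub> \<notin> S \<and>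
     (\<forall>s\<in>S. s \<otimes>\<^bsub>G\<^esub> s = \<one>\<^bsub>G\<^esub>) \<and> generate G S = carrier G \<and>
     (\<forall>w \<in> lists S. word_prod G w = \<one>\<^bsub>G\<^esub> \<longrightarrow> (cox_move G S)\<^sup>*\<^sup>* w [])"

definition conj_closure :: "('a, 'b) monoid_scheme \<Rightarrow> 'a set \<Rightarrow> 'a set" where
  "conj_closure G S = {w \<otimes>\<^bsub>G\<^esub> s \<otimes>\<^bsub>G\<^esub> inv\<^bsub>G\<^esub> w | w s. w \<in> carrier G \<and> s \<in> S}"

definition simplex :: "('a, 'b) monoid_scheme \<Rightarrow> 'a set \<Rightarrow> 'a set \<Rightarrow> bool" where
  "simplex G S A \<longleftrightarrow> A \<subseteq> S \<and> (\<forall>s\<in>A. \<forall>t\<in>A. cox_m G s t \<noteq> 0)"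

definition irreducible_set :: "('a, 'b) monoid_scheme \<Rightarrow> 'a set \<Rightarrow> bool" where
  "irreducible_set G A \<longleftrightarrow> A \<noteq> {} \<and>
     (\<forall>s\<in>A. \<forall>t\<in>A. (s, t) \<in> {(x, y). x \<in> A \<and> y \<in> A \<and> cox_m G x y \<ge> 3}\<^sup>*)"

definition spgrp :: "('a, 'b) monoid_scheme \<Rightarrow> 'a set \<Rightarrow> ('a, 'b) monoid_scheme" where
  "spgrp G A = G\<lparr>carrier := generate G A\<rparr>"

definition pair_iso :: "('a, 'b) monoid_scheme \<Rightarrow> 'a set \<Rightarrow> 'a set \<Rightarrow> ('a \<Rightarrow> 'a) \<Rightarrow> bool" where
  "pair_iso G A A' f \<longleftrightarrow> f \<in> iso (spgrp G A) (spgrp G A') \<and> f ` A = A'"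

definition conjug :: "('a, 'b) monoid_scheme \<Rightarrow> 'a \<Rightarrow> 'a \<Rightarrow> 'a" where
  "conjug G u w = u \<otimes>\<^bsub>G\<^esub> w \<otimes>\<^bsub>G\<^esub> inv\<^bsub>G\<^esub> u"

definition inner_by_graph :: "('a, 'b) monoid_scheme \<Rightarrow> 'a set \<Rightarrow> ('a \<Rightarrow> 'a) \<Rightarrow> bool" where
  "inner_by_graph G A \<phi> \<longleftrightarrow> (\<exists>g \<in> generate G A. \<exists>\<sigma>. pair_iso G A A \<sigma> \<and>
      (\<forall>x \<in> generate G A. \<phi> x = conjug G g (\<sigma> x)))"

end

theory Submission
  imports Defs
begin

(*
  Unfolding the definition, u_* alpha is inner-by-graph iff u A' u^-1 = g A g^-1 for some
  g in <A>, so it suffices to see that this condition does not depend on the choice of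
  (u, A'). With v = u^-1 ub we have v <Ab'> v^-1 = <A'>, and for a Coxeter system (W, S')
  this forces v Ab' v^-1 = c A' c^-1 for some c in <A'>.

  For that fact, with I = A' and J = Ab', replace v by an element of minimal length in the
  double coset <I> v <J>. For s in J the conjugate t = v s v^-1 lies in <I> and
  l(t v) = l(v s) = l(v) + 1. On the other hand l(x v) = l_I(x) + l(v) for all x in <I>:
  a shortest I-word for x followed by a reduced word for v crosses pairwise distinct
  reflections, and such words are reduced. Hence t has I-length 1, i.e. t is in I.
  Words crossing distinct reflections are reduced because the parity of the number of
  times a word crosses a reflection depends only on its product: it is invariant under
  the Coxeter relations, which present W.
*)

lemma count_list_map_eq:
  assumes "\<forall>x\<in>set xs. f x = y \<longleftrightarrow> x = z"
  shows "count_list (map f xs) y = count_list xs z"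
  using assms by (induction xs) auto

lemma even_length_if_even_counts:
  assumes "\<And>x. even (count_list xs x)"
  shows "even (length xs)"
proof -
  have "even (sum (count_list xs) (set xs))"
    using assms by (simp add: dvd_sum)
  then show ?thesis
    by (simp add: sum_count_set)
qed

lemma even_count_list_map_periodic:
  assumes "\<And>i. f (i + m) = f i"
  shows "even (count_list (map f [0..<2 * m]) x)"
proof -
  have "map f [m..<m + m] = map (\<lambda>i. f (i + m)) [0..<m]"
    by (simp flip: map_add_upt)
  also have "\<dots> = map f [0..<m]"
    using assms by simp
  finally have "map f [0..<2 * m] = map f [0..<m] @ map f [0..<m]"
    using upt_add_eq_append[of 0 m m] by (simp add: mult_2)
  then show ?thesis
    by simp
qed

section \<open>Conjugation and inner-by-graph automorphisms\<close>

context group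
begin

lemma inv_mult_cancel_left [simp]:
  "x \<in> carrier G \<Longrightarrow> y \<in> carrier G \<Longrightarrow> inv x \<otimes> (x \<otimes> y) = y"
  by (simp add: m_assoc[symmetric])

lemma conjug_closed [simp]: "g \<in> carrier G \<Longrightarrow> x \<in> carrier G \<Longrightarrow> conjug G g x \<in> carrier G"
  by (simp add: conjug_def)

lemma conjug_one [simp]: "x \<in> carrier G \<Longrightarrow> conjug G \<one> x = x"
  by (simp add: conjug_def)

lemma conjug_conjug:
  "g \<in> carrier G \<Longrightarrow> h \<in> carrier G \<Longrightarrow> x \<in> carrier G \<Longrightarrow>
    conjug G g (conjug G h x) = conjug G (g \<otimes> h) x"
  by (simp add: conjug_def m_assoc inv_mult_group)

lemma conjug_inv_conjug [simp]:
  "g \<in> carrier G \<Longrightarrow> x \<in> carrier G \<Longrightarrow> conjug G (inv g) (conjug G g x) = x"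
  by (simp add: conjug_conjug)

lemma conjug_conjug_inv [simp]:
  "g \<in> carrier G \<Longrightarrow> x \<in> carrier G \<Longrightarrow> conjug G g (conjug G (inv g) x) = x"
  by (simp add: conjug_conjug)

lemma conjug_mult:
  "g \<in> carrier G \<Longrightarrow> x \<in> carrier G \<Longrightarrow> y \<in> carrier G \<Longrightarrow>
    conjug G g (x \<otimes> y) = conjug G g x \<otimes> conjug G g y"
  by (simp add: conjug_def m_assoc[symmetric]) (simp add: m_assoc)

lemma conjug_eq_iff:
  "g \<in> carrier G \<Longrightarrow> x \<in> carrier G \<Longrightarrow> y \<in> carrier G \<Longrightarrow>
    conjug G g x = y \<longleftrightarrow> x = conjug G (inv g) y"
  by auto

lemma conjug_image_conjug:
  "g \<in> carrier G \<Longrightarrow> h \<in> carrier G \<Longrightarrow> B \<subseteq> carrier G \<Longrightarrow>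
    conjug G g ` conjug G h ` B = conjug G (g \<otimes> h) ` B"
  by (force simp: image_image conjug_conjug intro!: image_cong)

lemma conjug_inv_image_conjug [simp]:
  "g \<in> carrier G \<Longrightarrow> B \<subseteq> carrier G \<Longrightarrow> conjug G (inv g) ` conjug G g ` B = B"
  by (force simp: image_image intro!: image_cong)

lemma conjug_mem_subgroup:
  "subgroup H G \<Longrightarrow> g \<in> H \<Longrightarrow> x \<in> H \<Longrightarrow> conjug G g x \<in> H"
  by (simp add: conjug_def subgroup.m_closed subgroup.m_inv_closed)

lemma conjug_image_subgroup:
  assumes H: "subgroup H G" and g: "g \<in> H"
  shows "conjug G g ` H = H"
proof
  show "conjug G g ` H \<subseteq> H"
    using conjug_mem_subgroup[OF H g] by blast
  have "x = conjug G g (conjug G (inv g) x)" if "x \<in> H" for x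
    using that g subgroup.mem_carrier[OF H] by simp
  then show "H \<subseteq> conjug G g ` H"
    using conjug_mem_subgroup[OF H subgroup.m_inv_closed[OF H g]] by blast
qed

lemma conjug_iso_spgrp:
  assumes g: "g \<in> carrier G" and B: "B \<subseteq> carrier G"
    and BC: "conjug G g ` generate G B = generate G C"
  shows "conjug G g \<in> iso (spgrp G B) (spgrp G C)"
proof (rule isoI)
  have sub: "generate G B \<subseteq> carrier G"
    using generate_incl[OF B] .
  show "conjug G g \<in> hom (spgrp G B) (spgrp G C)"
    using BC sub g by (intro homI) (auto simp: spgrp_def conjug_mult subsetD)
  have "inj_on (conjug G g) (generate G B)"
    using sub g by (intro inj_onI) (metis conjug_inv_conjug subsetD)
  then show "bij_betw (conjug G g) (carrier (spgrp G B)) (carrier (spgrp G C))"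
    using BC by (simp add: spgrp_def bij_betw_def)
qed

lemma inner_by_graph_iff_conjugate_generators:
  assumes A: "A \<subseteq> carrier G" and A': "A' \<subseteq> carrier G" and u: "u \<in> carrier G"
    and AA': "generate G A = conjug G u ` generate G A'"
    and \<alpha>: "pair_iso G A A' \<alpha>"
  shows "inner_by_graph G A (\<lambda>x. conjug G u (\<alpha> x)) \<longleftrightarrow>
    (\<exists>g\<in>generate G A. conjug G u ` A' = conjug G g ` A)"
proof
  assume "inner_by_graph G A (\<lambda>x. conjug G u (\<alpha> x))"
  then obtain g \<sigma> where g: "g \<in> generate G A" and \<sigma>: "\<sigma> ` A = A"
    and eq: "\<forall>x\<in>generate G A. conjug G u (\<alpha> x) = conjug G g (\<sigma> x)"
    unfolding inner_by_graph_def pair_iso_def by blast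
  have "conjug G u ` A' = (\<lambda>x. conjug G u (\<alpha> x)) ` A"
    using \<alpha> by (auto simp: pair_iso_def)
  also have "\<dots> = conjug G g ` \<sigma> ` A"
    using eq generate.incl[of _ A G] by (force simp: image_image intro!: image_cong)
  finally show "\<exists>g\<in>generate G A. conjug G u ` A' = conjug G g ` A"
    using g \<sigma> by auto
next
  assume "\<exists>g\<in>generate G A. conjug G u ` A' = conjug G g ` A"
  then obtain g where g: "g \<in> generate G A" and gA: "conjug G u ` A' = conjug G g ` A"
    by blast
  have sub: "subgroup (generate G A) G"
    using generate_is_subgroup[OF A] .
  have gc: "g \<in> carrier G"
    using subgroup.mem_carrier[OF sub g] .
  define \<sigma> where "\<sigma> = conjug G (inv g) \<circ> conjug G u \<circ> \<alpha>"
  have "conjug G u \<in> iso (spgrp G A') (spgrp G A)"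
    using conjug_iso_spgrp[OF u A' AA'[symmetric]] .
  moreover have "conjug G (inv g) \<in> iso (spgrp G A) (spgrp G A)"
    using conjug_iso_spgrp[OF inv_closed[OF gc] A]
      conjug_image_subgroup[OF sub subgroup.m_inv_closed[OF sub g]] by simp
  ultimately have "\<sigma> \<in> iso (spgrp G A) (spgrp G A)"
    using \<alpha> unfolding \<sigma>_def pair_iso_def by (blast intro: iso_set_trans)
  moreover have "\<sigma> ` A = A"
  proof -
    have "\<sigma> ` A = conjug G (inv g) ` conjug G u ` \<alpha> ` A"
      by (simp add: \<sigma>_def image_comp)
    then show ?thesis
      using \<alpha> gA A gc by (simp add: pair_iso_def)
  qed
  moreover have "conjug G u (\<alpha> x) = conjug G g (\<sigma> x)" if "x \<in> generate G A" for x
  proof -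
    have "\<alpha> x \<in> generate G A'"
      using \<alpha> that by (auto simp: pair_iso_def iso_def spgrp_def dest: bij_betwE)
    then show ?thesis
      using generate_incl[OF A'] u gc by (auto simp: \<sigma>_def)
  qed
  ultimately show "inner_by_graph G A (\<lambda>x. conjug G u (\<alpha> x))"
    unfolding inner_by_graph_def pair_iso_def using g by blast
qed

end

section \<open>Reflections crossed by a word\<close>

(* For w = s_1 ... s_k the i-th entry is s_1 ... s_(i-1) s_i s_(i-1) ... s_1. *)
primrec word_refls :: "('a, 'b) monoid_scheme \<Rightarrow> 'a list \<Rightarrow> 'a list" where
  "word_refls G [] = []"
| "word_refls G (s # w) = s # map (conjug G s) (word_refls G w)"

lemma length_word_refls [simp]: "length (word_refls G w) = length w"
  by (induction w) auto

locale coxeter =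
  fixes G (structure) and S
  assumes coxeter_system: "coxeter_system G S"
begin

sublocale group G
  using coxeter_system by (simp add: coxeter_system_def)

lemma gens_closed: "S \<subseteq> carrier G"
  using coxeter_system by (simp add: coxeter_system_def)

lemma gen_mult_self: "s \<in> S \<Longrightarrow> s \<otimes> s = \<one>"
  using coxeter_system by (simp add: coxeter_system_def)

lemma inv_gen: "s \<in> S \<Longrightarrow> inv s = s"
  using gen_mult_self gens_closed inv_equality by blast

lemma gen_closed [simp]: "s \<in> S \<Longrightarrow> s \<in> carrier G"
  using gens_closed by blast

lemma conjug_gen_self: "s \<in> S \<Longrightarrow> conjug G s s = s"
  by (simp add: conjug_def inv_gen m_assoc gen_mult_self)

lemma word_prod_Nil [simp]: "word_prod G [] = \<one>"
  by (simp add: word_prod_def)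

lemma word_prod_Cons [simp]: "word_prod G (s # w) = s \<otimes> word_prod G w"
  by (simp add: word_prod_def)

lemma word_prod_closed [simp]: "w \<in> lists S \<Longrightarrow> word_prod G w \<in> carrier G"
  by (induction w) auto

lemma word_prod_append [simp]:
  "x \<in> lists S \<Longrightarrow> y \<in> lists S \<Longrightarrow> word_prod G (x @ y) = word_prod G x \<otimes> word_prod G y"
  by (induction x) (auto simp: m_assoc)

lemma word_prod_rev: "w \<in> lists S \<Longrightarrow> word_prod G (rev w) = inv (word_prod G w)"
proof (induction w)
  case (Cons s w)
  then have "rev w \<in> lists S" "s \<in> S"
    by auto
  then have "word_prod G (rev (s # w)) = inv (word_prod G w) \<otimes> inv s"
    using Cons by (simp add: inv_gen)
  then show ?case
    using Cons.prems by (simp add: inv_mult_group)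
qed simp

lemma generate_eq_word_prods:
  assumes I: "I \<subseteq> S"
  shows "generate G I = word_prod G ` lists I"
proof
  have "lists I \<subseteq> lists S"
    using I by blast
  show "generate G I \<subseteq> word_prod G ` lists I"
  proof
    fix g assume "g \<in> generate G I"
    then show "g \<in> word_prod G ` lists I"
    proof (induction rule: generate.induct)
      case one
      show ?case
        using word_prod_Nil lists.Nil by (metis image_eqI)
    next
      case (incl s)
      then have "word_prod G [s] = s" "[s] \<in> lists I"
        using I by auto
      then show ?case
        by (metis image_eqI)
    next
      case (inv s)
      then have "word_prod G [s] = inv s" "[s] \<in> lists I"
        using I by (auto simp: inv_gen)
      then show ?case
        by (metis image_eqI)
    next
      case (eng g h)
      then obtain x y where "x \<in> lists I" "y \<in> lists I" "g = word_prod G x" "h = word_prod G y"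
        by blast
      moreover have "x \<in> lists S" "y \<in> lists S"
        using calculation \<open>lists I \<subseteq> lists S\<close> by auto
      ultimately have "word_prod G (x @ y) = g \<otimes> h" "x @ y \<in> lists I"
        by auto
      then show ?case
        by (metis image_eqI)
    qed
  qed
  have "word_prod G w \<in> generate G I" if "w \<in> lists I" for w
    using that by (induction w) (auto intro: generate.one generate.eng generate.incl)
  then show "word_prod G ` lists I \<subseteq> generate G I"
    by blast
qed

lemma generate_subgroup: "I \<subseteq> S \<Longrightarrow> subgroup (generate G I) G"
  using generate_is_subgroup gens_closed by blast

lemma generate_closed: "I \<subseteq> S \<Longrightarrow> generate G I \<subseteq> carrier G"
  using generate_incl gens_closed by blast

lemma word_refls_closed: "w \<in> lists S \<Longrightarrow> set (word_refls G w) \<subseteq> carrier G"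
  by (induction w) auto

lemma word_refls_in_generate:
  assumes I: "I \<subseteq> S" and w: "w \<in> lists I"
  shows "set (word_refls G w) \<subseteq> generate G I"
  using w by (induction w)
    (auto intro: conjug_mem_subgroup[OF generate_subgroup[OF I]] generate.incl)

lemma word_refls_append:
  assumes "x \<in> lists S" "y \<in> lists S"
  shows "word_refls G (x @ y) = word_refls G x @ map (conjug G (word_prod G x)) (word_refls G y)"
  using assms
proof (induction x)
  case Nil
  have "map (conjug G \<one>) (word_refls G y) = word_refls G y"
    using word_refls_closed[OF assms(2)] by (intro map_idI) auto
  then show ?case
    by simp
next
  case (Cons s x)
  then show ?case
    using word_refls_closed[of y] by (auto simp: conjug_conjug subsetD)
qed

lemma count_word_refls_append:
  assumes x: "x \<in> lists S" and y: "y \<in> lists S" and t: "t \<in> carrier G"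
  shows "count_list (word_refls G (x @ y)) t =
    count_list (word_refls G x) t + count_list (word_refls G y) (conjug G (inv (word_prod G x)) t)"
proof -
  have "word_prod G x \<in> carrier G"
    using x by simp
  then have "count_list (map (conjug G (word_prod G x)) (word_refls G y)) t =
      count_list (word_refls G y) (conjug G (inv (word_prod G x)) t)"
    using word_refls_closed[OF y] t by (intro count_list_map_eq) (auto simp: conjug_eq_iff)
  then show ?thesis
    using x y by (simp add: word_refls_append)
qed

lemma word_prod_relator:
  "s \<in> S \<Longrightarrow> t \<in> S \<Longrightarrow> word_prod G (concat (replicate m [s, t])) = (s \<otimes> t) [^] m"
  by (induction m) (simp_all add: m_assoc[symmetric] nat_pow_Suc2[symmetric])

lemma word_refls_relator:
  assumes s: "s \<in> S" and t: "t \<in> S"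
  shows "word_refls G (concat (replicate m [s, t])) = map (\<lambda>i. (s \<otimes> t) [^] i \<otimes> s) [0..<2 * m]"
proof (induction m)
  case (Suc m)
  define f where "f i = (s \<otimes> t) [^] i \<otimes> s" for i :: nat
  have shift: "conjug G (s \<otimes> t) (f i) = f (i + 2)" for i
  proof -
    have "conjug G (s \<otimes> t) (f i) = (s \<otimes> t) \<otimes> (s \<otimes> t) [^] i \<otimes> (s \<otimes> t) \<otimes> s"
      using s t by (simp add: conjug_def f_def inv_mult_group inv_gen m_assoc)
    then show ?thesis
      using s t by (simp add: f_def nat_pow_Suc2[symmetric])
  qed
  have "f 1 = conjug G s t"
    using s t by (simp add: f_def conjug_def inv_gen)
  moreover have "[0..<2 * Suc m] = 0 # 1 # map (\<lambda>i. i + 2) [0..<2 * m]"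
    using map_add_upt[of 2 "2 * m"] by (simp add: upt_conv_Cons numeral_2_eq_2 del: upt_Suc)
  ultimately show ?case
    using Suc s t shift by (simp add: f_def conjug_conjug del: upt_Suc)
qed simp

lemma cox_relator_props:
  assumes "r \<in> cox_relators G S"
  shows "r \<in> lists S" and "word_prod G r = \<one>" and "even (count_list (word_refls G r) z)"
proof -
  obtain s t where r: "r = concat (replicate (ord (s \<otimes> t)) [s, t])" and st: "s \<in> S" "t \<in> S"
    using assms by (auto simp: cox_relators_def cox_m_def)
  show "r \<in> lists S"
    using r st by (auto split: if_splits)
  show "word_prod G r = \<one>"
    using r st by (simp add: word_prod_relator)
  have "(s \<otimes> t) [^] (i + ord (s \<otimes> t)) \<otimes> s = (s \<otimes> t) [^] i \<otimes> s" for i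
    using st by (simp add: nat_pow_mult[symmetric])
  then show "even (count_list (word_refls G r) z)"
    unfolding r word_refls_relator[OF st] by (rule even_count_list_map_periodic)
qed

lemma even_count_insert_relator:
  assumes x: "x \<in> lists S" and y: "y \<in> lists S" and r: "r \<in> cox_relators G S"
    and z: "z \<in> carrier G"
  shows "even (count_list (word_refls G (x @ r @ y)) z) \<longleftrightarrow>
    even (count_list (word_refls G (x @ y)) z)"
proof -
  note r_props = cox_relator_props[OF r]
  define z' where "z' = conjug G (inv (word_prod G x)) z"
  have z': "z' \<in> carrier G"
    using x z by (simp add: z'_def)
  have "count_list (word_refls G (x @ r @ y)) z =
      count_list (word_refls G x) z + count_list (word_refls G r) z' + count_list (word_refls G y) z'"
    using x y z z' r_props(1,2) by (simp add: count_word_refls_append z'_def)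
  moreover have "count_list (word_refls G (x @ y)) z =
      count_list (word_refls G x) z + count_list (word_refls G y) z'"
    using x y z by (simp add: count_word_refls_append z'_def)
  ultimately show ?thesis
    using r_props(3)[of z'] by simp
qed

lemma cox_moves_preserve_parities:
  assumes "(cox_move G S)\<^sup>*\<^sup>* v w" and "v \<in> lists S" and "z \<in> carrier G"
  shows "w \<in> lists S \<and>
    (even (count_list (word_refls G v) z) \<longleftrightarrow> even (count_list (word_refls G w) z))"
  using assms(1)
proof (induction rule: rtranclp_induct)
  case (step w w')
  obtain x y r where r: "r \<in> cox_relators G S"
    and ww': "(w = x @ r @ y \<and> w' = x @ y) \<or> (w = x @ y \<and> w' = x @ r @ y)"
    using step.hyps(2) unfolding cox_move_def by blast
  have "x \<in> lists S" "y \<in> lists S"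
    using ww' step.IH by auto
  then show ?case
    using ww' step.IH cox_relator_props(1)[OF r] even_count_insert_relator[OF _ _ r assms(3)]
    by auto
qed (use assms in simp)

lemma even_count_word_refls_if_trivial:
  assumes w: "w \<in> lists S" and "word_prod G w = \<one>"
  shows "even (count_list (word_refls G w) z)"
proof (cases "z \<in> carrier G")
  case True
  have "(cox_move G S)\<^sup>*\<^sup>* w []"
    using coxeter_system assms by (simp add: coxeter_system_def)
  then show ?thesis
    using cox_moves_preserve_parities[OF _ w True] by simp
next
  case False
  then have "z \<notin> set (word_refls G w)"
    using word_refls_closed[OF w] by blast
  then show ?thesis
    by simp
qed

lemma word_refls_parity_eq:
  assumes w: "w \<in> lists S" and w': "w' \<in> lists S" and eq: "word_prod G w = word_prod G w'"
    and z: "z \<in> carrier G"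
  shows "even (count_list (word_refls G w) z) \<longleftrightarrow> even (count_list (word_refls G w') z)"
proof -
  have rev: "rev w' \<in> lists S"
    using w' by auto
  have "word_prod G (w @ rev w') = \<one>" "word_prod G (w' @ rev w') = \<one>"
    using w w' rev eq by (simp_all add: word_prod_rev)
  then show ?thesis
    using even_count_word_refls_if_trivial[of "w @ rev w'" z]
      even_count_word_refls_if_trivial[of "w' @ rev w'" z]
    using w w' rev eq z by (simp add: count_word_refls_append)
qed

lemma even_length_eq_if_word_prod_eq:
  assumes w: "w \<in> lists S" and w': "w' \<in> lists S" and eq: "word_prod G w = word_prod G w'"
  shows "even (length w) \<longleftrightarrow> even (length w')"
proof -
  have rev: "rev w' \<in> lists S"
    using w' by auto
  have "word_prod G (w @ rev w') = \<one>"
    using w w' rev eq by (simp add: word_prod_rev)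
  then have "even (length (word_refls G (w @ rev w')))"
    using w rev by (intro even_length_if_even_counts even_count_word_refls_if_trivial) auto
  then show ?thesis
    by simp
qed

section \<open>The length function\<close>

definition cox_len :: "'a \<Rightarrow> nat" where
  "cox_len g = (LEAST n. \<exists>w\<in>lists S. length w = n \<and> word_prod G w = g)"

lemma cox_len_witness:
  assumes "g \<in> carrier G"
  obtains w where "w \<in> lists S" "length w = cox_len g" "word_prod G w = g"
proof -
  have "g \<in> word_prod G ` lists S"
    using assms coxeter_system generate_eq_word_prods[of S] by (simp add: coxeter_system_def)
  then have "\<exists>n. \<exists>w\<in>lists S. length w = n \<and> word_prod G w = g"
    by blast
  then have "\<exists>w\<in>lists S. length w = cox_len g \<and> word_prod G w = g"
    unfolding cox_len_def by (rule LeastI_ex)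
  then show ?thesis
    using that by blast
qed

lemma cox_len_le: "w \<in> lists S \<Longrightarrow> cox_len (word_prod G w) \<le> length w"
  unfolding cox_len_def by (rule Least_le) blast

lemma cox_len_inv:
  assumes "g \<in> carrier G"
  shows "cox_len (inv g) = cox_len g"
proof -
  have le: "cox_len (inv h) \<le> cox_len h" if h: "h \<in> carrier G" for h
  proof -
    obtain w where w: "w \<in> lists S" "length w = cox_len h" "word_prod G w = h"
      using cox_len_witness[OF h] .
    then have "rev w \<in> lists S" "word_prod G (rev w) = inv h"
      by (auto simp: word_prod_rev)
    then show ?thesis
      using cox_len_le w(2) by fastforce
  qed
  show ?thesis
    using le[OF assms] le[of "inv g"] assms by simp
qed

lemma cox_len_mult_gen:
  assumes g: "g \<in> carrier G" and s: "s \<in> S"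
  shows "cox_len (g \<otimes> s) = cox_len g + 1 \<or> cox_len g = cox_len (g \<otimes> s) + 1"
proof -
  obtain w where w: "w \<in> lists S" "length w = cox_len g" "word_prod G w = g"
    using cox_len_witness[OF g] .
  obtain w' where w': "w' \<in> lists S" "length w' = cox_len (g \<otimes> s)" "word_prod G w' = g \<otimes> s"
    using cox_len_witness[of "g \<otimes> s"] g s by auto
  have ws: "w @ [s] \<in> lists S" "word_prod G (w @ [s]) = g \<otimes> s"
    and w's: "w' @ [s] \<in> lists S" "word_prod G (w' @ [s]) = g"
    using w w' s g by (simp_all add: m_assoc gen_mult_self)
  have "cox_len (g \<otimes> s) \<le> cox_len g + 1" "cox_len g \<le> cox_len (g \<otimes> s) + 1"
    using cox_len_le[OF ws(1)] cox_len_le[OF w's(1)] ws(2) w's(2) w(2) w'(2) by simp_all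
  moreover have "even (cox_len (g \<otimes> s)) \<longleftrightarrow> odd (cox_len g)"
    using even_length_eq_if_word_prod_eq[OF w'(1) ws(1)] w'(3) ws(2) w(2) w'(2) by simp
  ultimately show ?thesis
    by presburger
qed

lemma refl_mult_eq_word_prod_delete:
  assumes x: "x \<in> lists S" and a: "a \<in> S" and z: "z \<in> lists S"
  shows "conjug G (word_prod G x) a \<otimes> word_prod G (x @ a # z) = word_prod G (x @ z)"
proof -
  have "conjug G (word_prod G x) a \<otimes> word_prod G (x @ a # z) =
      word_prod G x \<otimes> (a \<otimes> a) \<otimes> word_prod G z"
    using x a z by (simp add: conjug_def m_assoc)
  then show ?thesis
    using x a z by (simp add: gen_mult_self)
qed

lemma word_prod_delete_pair:
  assumes x: "x \<in> lists S" and a: "a \<in> S" and y: "y \<in> lists S" and b: "b \<in> S"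
    and z: "z \<in> lists S"
    and eq: "conjug G (word_prod G x) a = conjug G (word_prod G (x @ a # y)) b"
  shows "word_prod G (x @ a # y @ b # z) = word_prod G (x @ y @ z)"
proof -
  define t where "t = conjug G (word_prod G x) a"
  have t: "t \<in> carrier G" "inv t = t"
    using x a by (simp_all add: t_def conjug_def inv_mult_group m_assoc inv_gen)
  have w: "x @ a # y @ b # z \<in> lists S"
    using x a y b z by simp
  have "word_prod G (x @ a # y @ b # z) = inv t \<otimes> (t \<otimes> word_prod G (x @ a # y @ b # z))"
    using t(1) word_prod_closed[OF w] by simp
  also have "\<dots> = t \<otimes> word_prod G (x @ a # (y @ z))"
    using refl_mult_eq_word_prod_delete[of "x @ a # y" b z] x a y b z eq t(2) by (simp add: t_def)
  also have "\<dots> = word_prod G (x @ y @ z)"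
    using refl_mult_eq_word_prod_delete[of x a "y @ z"] x a y z by (simp add: t_def)
  finally show ?thesis .
qed

lemma word_refls_mem_decomp:
  assumes "w \<in> lists S" and "t \<in> set (word_refls G w)"
  shows "\<exists>x a z. w = x @ a # z \<and> t = conjug G (word_prod G x) a"
  using assms
proof (induction w arbitrary: t)
  case (Cons s w)
  show ?case
  proof (cases "t = s")
    case True
    then have "s # w = [] @ s # w \<and> t = conjug G (word_prod G []) s"
      using Cons by simp
    then show ?thesis
      by blast
  next
    case False
    then obtain t' where t': "t' \<in> set (word_refls G w)" "t = conjug G s t'"
      using Cons by auto
    then obtain x a z where "w = x @ a # z" "t' = conjug G (word_prod G x) a"
      using Cons.IH by blast
    then have "s # w = (s # x) @ a # z \<and> t = conjug G (word_prod G (s # x)) a"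
      using Cons t' by (auto simp: conjug_conjug)
    then show ?thesis
      by blast
  qed
qed simp

lemma word_refls_not_distinct_decomp:
  assumes "w \<in> lists S" and "\<not> distinct (word_refls G w)"
  shows "\<exists>x a y b z. w = x @ a # y @ b # z \<and>
    conjug G (word_prod G x) a = conjug G (word_prod G (x @ a # y)) b"
  using assms
proof (induction w)
  case (Cons s w)
  have s: "s \<in> S" and w: "w \<in> lists S"
    using Cons by auto
  have inj: "inj_on (conjug G s) (set (word_refls G w))"
    using word_refls_closed[OF w] s by (intro inj_onI) (metis conjug_inv_conjug gen_closed subsetD)
  consider "s \<in> conjug G s ` set (word_refls G w)" | "\<not> distinct (word_refls G w)"
    using Cons inj by (auto simp: distinct_map simp del: Cons_in_lists_iff)
  then show ?case
  proof cases
    case 1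
    then obtain t where t: "t \<in> set (word_refls G w)" "s = conjug G s t"
      by blast
    then have "t = conjug G (inv s) s"
      using s word_refls_closed[OF w] by (metis conjug_inv_conjug gen_closed subsetD)
    then have "t = s"
      using s by (simp add: inv_gen conjug_gen_self)
    then obtain y b z where ybz: "w = y @ b # z" and sb: "s = conjug G (word_prod G y) b"
      using word_refls_mem_decomp[OF w] t(1) by blast
    have "y \<in> lists S" "b \<in> S"
      using w ybz by auto
    then have "conjug G (word_prod G (s # y)) b = conjug G s s"
      using s sb by (simp add: conjug_conjug)
    also have "\<dots> = s"
      using s by (rule conjug_gen_self)
    finally have "s # w = [] @ s # y @ b # z \<and>
        conjug G (word_prod G []) s = conjug G (word_prod G ([] @ s # y)) b"
      using s ybz by simp
    then show ?thesis
      by blast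
  next
    case 2
    then obtain x a y b z where "w = x @ a # y @ b # z"
      and "conjug G (word_prod G x) a = conjug G (word_prod G (x @ a # y)) b"
      using Cons.IH w by blast
    then have "s # w = (s # x) @ a # y @ b # z \<and>
        conjug G (word_prod G (s # x)) a = conjug G (word_prod G ((s # x) @ a # y)) b"
      using s w by (auto simp: conjug_conjug[symmetric])
    then show ?thesis
      by blast
  qed
qed simp

lemma reduced_if_distinct_refls:
  assumes w: "w \<in> lists S" and d: "distinct (word_refls G w)"
  shows "cox_len (word_prod G w) = length w"
proof -
  obtain w' where w': "w' \<in> lists S" "length w' = cox_len (word_prod G w)"
    "word_prod G w' = word_prod G w"
    using cox_len_witness[of "word_prod G w"] w by auto
  have "set (word_refls G w) \<subseteq> set (word_refls G w')"
  proof
    fix t assume t: "t \<in> set (word_refls G w)"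
    then have "odd (count_list (word_refls G w) t)"
      using d by (simp add: count_list_eq_length_filter distinct_length_filter)
    then have "odd (count_list (word_refls G w') t)"
      using word_refls_parity_eq[OF w w'(1) w'(3)[symmetric]] t word_refls_closed[OF w] by blast
    then show "t \<in> set (word_refls G w')"
      using count_notin by fastforce
  qed
  then have "length w \<le> length w'"
    using d card_mono[OF _ \<open>set _ \<subseteq> _\<close>] card_length[of "word_refls G w'"]
    by (simp add: distinct_card)
  then show ?thesis
    using w' cox_len_le[OF w] by simp
qed

lemma distinct_refls_if_minimal:
  assumes T: "T \<subseteq> S" and w: "w \<in> lists T"
    and min: "\<And>w'. w' \<in> lists T \<Longrightarrow> word_prod G w' = word_prod G w \<Longrightarrow> length w \<le> length w'"
  shows "distinct (word_refls G w)"
proof (rule ccontr)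
  assume "\<not> distinct (word_refls G w)"
  moreover have wS: "w \<in> lists S"
    using w T by blast
  ultimately obtain x a y b z where xz: "w = x @ a # y @ b # z"
    and eq: "conjug G (word_prod G x) a = conjug G (word_prod G (x @ a # y)) b"
    using word_refls_not_distinct_decomp by blast
  have "x @ y @ z \<in> lists T"
    using w xz by simp
  moreover have "word_prod G (x @ y @ z) = word_prod G w"
    using word_prod_delete_pair[OF _ _ _ _ _ eq] wS xz by simp
  ultimately show False
    using min xz by fastforce
qed

section \<open>Conjugate special subgroups\<close>

lemma shortest_word_exists:
  assumes I: "I \<subseteq> S" and g: "g \<in> generate G I"
  obtains x where "x \<in> lists I" "word_prod G x = g"
    "\<And>x'. x' \<in> lists I \<Longrightarrow> word_prod G x' = g \<Longrightarrow> length x \<le> length x'"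
proof -
  obtain x0 where "x0 \<in> lists I" "word_prod G x0 = g"
    using g generate_eq_word_prods[OF I] by auto
  then have "\<exists>x. (x \<in> lists I \<and> word_prod G x = g) \<and>
      (\<forall>x'. x' \<in> lists I \<and> word_prod G x' = g \<longrightarrow> length x \<le> length x')"
    by (intro ex_has_least_nat) auto
  then obtain x where "x \<in> lists I" "word_prod G x = g"
    and "\<forall>x'. x' \<in> lists I \<and> word_prod G x' = g \<longrightarrow> length x \<le> length x'"
    by blast
  then show ?thesis
    using that by blast
qed

lemma cox_len_mult_minimal_coset_rep:
  assumes I: "I \<subseteq> S" and v: "v \<in> carrier G"
    and v_min: "\<And>a. a \<in> generate G I \<Longrightarrow> cox_len v \<le> cox_len (a \<otimes> v)"
    and x: "x \<in> lists I"
    and x_min: "\<And>x'. x' \<in> lists I \<Longrightarrow> word_prod G x' = word_prod G x \<Longrightarrow> length x \<le> length x'"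
  shows "cox_len (word_prod G x \<otimes> v) = length x + cox_len v"
proof -
  obtain V where V: "V \<in> lists S" "length V = cox_len v" "word_prod G V = v"
    using cox_len_witness[OF v] .
  have xS: "x \<in> lists S"
    using x I by blast
  define P where "P = word_prod G x"
  have P: "P \<in> generate G I" "P \<in> carrier G"
    using x xS generate_eq_word_prods[OF I] by (auto simp: P_def)
  have "distinct (word_refls G x)"
    using distinct_refls_if_minimal[OF I x x_min] .
  moreover have "distinct (word_refls G V)"
    using distinct_refls_if_minimal[OF subset_refl V(1)] cox_len_le V by fastforce
  moreover have "inj_on (conjug G P) (set (word_refls G V))"
    using word_refls_closed[OF V(1)] P(2) by (intro inj_onI) (metis conjug_inv_conjug subsetD)
  moreover have "conjug G P r \<notin> set (word_refls G x)" if r: "r \<in> set (word_refls G V)" for r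
  proof
    assume "conjug G P r \<in> set (word_refls G x)"
    then have "conjug G (inv P) (conjug G P r) \<in> generate G I"
      using word_refls_in_generate[OF I x] P(1) generate_subgroup[OF I]
      by (meson conjug_mem_subgroup subgroup.m_inv_closed subsetD)
    then have rI: "r \<in> generate G I"
      using r word_refls_closed[OF V(1)] P(2) by auto
    obtain y a z where yaz: "V = y @ a # z" and "r = conjug G (word_prod G y) a"
      using word_refls_mem_decomp[OF V(1) r] by blast
    then have "r \<otimes> v = word_prod G (y @ z)"
      using refl_mult_eq_word_prod_delete[of y a z] V by simp
    then have "cox_len (r \<otimes> v) < cox_len v"
      using cox_len_le[of "y @ z"] V yaz by simp
    then show False
      using v_min[OF rI] by simp
  qed
  ultimately have "distinct (word_refls G (x @ V))"
    using xS V by (auto simp: word_refls_append distinct_map P_def)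
  then show ?thesis
    using reduced_if_distinct_refls[of "x @ V"] xS V by (simp add: P_def)
qed

definition minimal_in_double_coset :: "'a set \<Rightarrow> 'a set \<Rightarrow> 'a \<Rightarrow> bool" where
  "minimal_in_double_coset I J v \<longleftrightarrow> v \<in> carrier G \<and>
    (\<forall>a\<in>generate G I. \<forall>b\<in>generate G J. cox_len v \<le> cox_len (a \<otimes> v \<otimes> b))"

lemma minimal_in_double_coset_exists:
  assumes I: "I \<subseteq> S" and J: "J \<subseteq> S" and v: "v \<in> carrier G"
  shows "\<exists>a\<in>generate G I. \<exists>b\<in>generate G J. minimal_in_double_coset I J (a \<otimes> v \<otimes> b)"
proof -
  let ?D = "{a \<otimes> v \<otimes> b | a b. a \<in> generate G I \<and> b \<in> generate G J}"
  have "v \<in> ?D"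
    using v generate.one[of G I] generate.one[of G J] by force
  then obtain v' where v': "v' \<in> ?D" and min: "\<And>w. w \<in> ?D \<Longrightarrow> cox_len v' \<le> cox_len w"
    using ex_has_least_nat[of "\<lambda>w. w \<in> ?D" v cox_len] by blast
  then obtain a b where ab: "a \<in> generate G I" "b \<in> generate G J" "v' = a \<otimes> v \<otimes> b"
    by blast
  have abc: "a \<in> carrier G" "b \<in> carrier G"
    using ab generate_closed I J by auto
  have "cox_len v' \<le> cox_len (a' \<otimes> v' \<otimes> b')"
    if "a' \<in> generate G I" "b' \<in> generate G J" for a' b'
  proof -
    have "a' \<in> carrier G" "b' \<in> carrier G"
      using that generate_closed I J by auto
    then have "a' \<otimes> v' \<otimes> b' = (a' \<otimes> a) \<otimes> v \<otimes> (b \<otimes> b')"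
      using abc v by (simp add: ab(3) m_assoc)
    moreover have "(a' \<otimes> a) \<otimes> v \<otimes> (b \<otimes> b') \<in> ?D"
      using that ab generate_subgroup I J by (blast intro: subgroup.m_closed)
    ultimately show ?thesis
      using min by simp
  qed
  then show ?thesis
    using ab abc v by (auto simp: minimal_in_double_coset_def)
qed

lemma minimal_in_double_coset_inv:
  assumes I: "I \<subseteq> S" and J: "J \<subseteq> S" and min: "minimal_in_double_coset I J v"
  shows "minimal_in_double_coset J I (inv v)"
proof -
  have v: "v \<in> carrier G"
    using min by (simp add: minimal_in_double_coset_def)
  have "cox_len (inv v) \<le> cox_len (b \<otimes> inv v \<otimes> a)"
    if a: "a \<in> generate G I" and b: "b \<in> generate G J" for a b
  proof -
    have abc: "a \<in> carrier G" "b \<in> carrier G"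
      using a b generate_closed I J by auto
    have "inv a \<in> generate G I" "inv b \<in> generate G J"
      using a b generate_subgroup I J by (auto intro: subgroup.m_inv_closed)
    then have "cox_len v \<le> cox_len (inv a \<otimes> v \<otimes> inv b)"
      using min by (simp add: minimal_in_double_coset_def)
    also have "inv a \<otimes> v \<otimes> inv b = inv (b \<otimes> inv v \<otimes> a)"
      using abc v by (simp add: inv_mult_group m_assoc)
    finally show ?thesis
      using abc v by (simp add: cox_len_inv)
  qed
  then show ?thesis
    using v by (simp add: minimal_in_double_coset_def)
qed

lemma conjug_mem_if_minimal:
  assumes I: "I \<subseteq> S" and J: "J \<subseteq> S" and min: "minimal_in_double_coset I J v"
    and IJ: "conjug G v ` generate G J = generate G I" and s: "s \<in> J"
  shows "conjug G v s \<in> I"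
proof -
  have v: "v \<in> carrier G" and s_car: "s \<in> carrier G"
    using min s J by (auto simp: minimal_in_double_coset_def)
  define t where "t = conjug G v s"
  have t: "t \<in> generate G I"
    using IJ s by (auto simp: t_def intro: generate.incl)
  have "cox_len v \<le> cox_len (\<one> \<otimes> v \<otimes> s)"
    using min s generate.one[of G I] generate.incl[of s J G]
    unfolding minimal_in_double_coset_def by blast
  then have "cox_len (v \<otimes> s) = cox_len v + 1"
    using cox_len_mult_gen[OF v] s J v by fastforce
  also have "v \<otimes> s = t \<otimes> v"
    using v s_car by (simp add: t_def conjug_def m_assoc)
  finally have ts: "cox_len (t \<otimes> v) = cox_len v + 1" .
  have v_min: "cox_len v \<le> cox_len (a \<otimes> v)" if "a \<in> generate G I" for a
  proof -
    have "cox_len v \<le> cox_len (a \<otimes> v \<otimes> \<one>)"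
      using min that generate.one[of G J] unfolding minimal_in_double_coset_def by blast
    then show ?thesis
      using that v generate_closed[OF I] by auto
  qed
  obtain x where x: "x \<in> lists I" "word_prod G x = t"
    and x_min: "\<And>x'. x' \<in> lists I \<Longrightarrow> word_prod G x' = t \<Longrightarrow> length x \<le> length x'"
    using shortest_word_exists[OF I t] by blast
  have "cox_len (t \<otimes> v) = length x + cox_len v"
    using cox_len_mult_minimal_coset_rep[OF I v v_min x(1)] x x_min by simp
  then have "length x = 1"
    using ts by simp
  then obtain s' where "x = [s']"
    by (auto simp: length_Suc_conv)
  then show ?thesis
    using x I by (auto simp: t_def)
qed

lemma conjug_image_eq_if_minimal:
  assumes I: "I \<subseteq> S" and J: "J \<subseteq> S" and min: "minimal_in_double_coset I J v"
    and IJ: "conjug G v ` generate G J = generate G I"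
  shows "conjug G v ` J = I"
proof
  have v: "v \<in> carrier G"
    using min by (simp add: minimal_in_double_coset_def)
  show "conjug G v ` J \<subseteq> I"
    using conjug_mem_if_minimal[OF I J min IJ] by blast
  have "conjug G (inv v) ` generate G I = generate G J"
    using IJ[symmetric] v generate_closed[OF J] by simp
  then have "conjug G (inv v) s \<in> J" if "s \<in> I" for s
    using conjug_mem_if_minimal[OF J I minimal_in_double_coset_inv[OF I J min]] that by blast
  moreover have "s = conjug G v (conjug G (inv v) s)" if "s \<in> I" for s
    using that I v by auto
  ultimately show "I \<subseteq> conjug G v ` J"
    by blast
qed

theorem conjugate_special_subgroups:
  assumes I: "I \<subseteq> S" and J: "J \<subseteq> S" and v: "v \<in> carrier G"
    and IJ: "conjug G v ` generate G J = generate G I"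
  shows "\<exists>c\<in>generate G I. conjug G v ` J = conjug G c ` I"
proof -
  obtain a b where a: "a \<in> generate G I" and b: "b \<in> generate G J"
    and min: "minimal_in_double_coset I J (a \<otimes> v \<otimes> b)"
    using minimal_in_double_coset_exists[OF I J v] by blast
  define v' where "v' = a \<otimes> v \<otimes> b"
  have abc: "a \<in> carrier G" "b \<in> carrier G"
    using a b generate_closed I J by auto
  have v': "v' \<in> carrier G"
    using abc v by (simp add: v'_def)
  have "conjug G v' ` generate G J = conjug G a ` conjug G v ` conjug G b ` generate G J"
    using abc v generate_closed[OF J] by (simp add: v'_def conjug_image_conjug m_assoc)
  also have "\<dots> = generate G I"
    using IJ conjug_image_subgroup a b generate_subgroup I J by simp
  finally have v'IJ: "conjug G v' ` generate G J = generate G I" .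
  then have v'J: "conjug G v' ` J = I"
    using conjug_image_eq_if_minimal[OF I J] min by (simp add: v'_def)
  define c where "c = inv a \<otimes> conjug G v' (inv b)"
  have "conjug G v' (inv b) \<in> generate G I"
    using v'IJ b generate_subgroup[OF J]
    by (blast intro: subgroup.m_inv_closed)
  then have c: "c \<in> generate G I"
    using a generate_subgroup[OF I] by (simp add: c_def subgroup.m_closed subgroup.m_inv_closed)
  have "c \<otimes> v' = v"
    using abc v by (simp add: c_def v'_def conjug_def m_assoc)
  moreover have "c \<in> carrier G" "J \<subseteq> carrier G"
    using c generate_closed[OF I] J gens_closed by auto
  ultimately have "conjug G v ` J = conjug G c ` conjug G v' ` J"
    using v' by (simp add: conjug_image_conjug)
  then show ?thesis
    using c v'J by auto
qed

lemma conjugate_generators_transfer: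
  assumes A: "A \<subseteq> carrier G" and A': "A' \<subseteq> S" and B: "B \<subseteq> S"
    and u: "u \<in> carrier G" and u': "u' \<in> carrier G"
    and Au: "generate G A = conjug G u ` generate G A'"
    and Au': "generate G A = conjug G u' ` generate G B"
    and conj_A': "\<exists>g\<in>generate G A. conjug G u ` A' = conjug G g ` A"
  shows "\<exists>g\<in>generate G A. conjug G u' ` B = conjug G g ` A"
proof -
  obtain g where g: "g \<in> generate G A" and gA: "conjug G u ` A' = conjug G g ` A"
    using conj_A' by blast
  define v where "v = inv u \<otimes> u'"
  have v: "v \<in> carrier G" and uv: "u \<otimes> v = u'"
    using u u' by (simp_all add: v_def m_assoc[symmetric])
  have "conjug G v ` generate G B = conjug G (inv u) ` conjug G u' ` generate G B"
    using u u' generate_closed[OF B] by (simp add: v_def conjug_image_conjug)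
  also have "\<dots> = generate G A'"
    using Au Au' u generate_closed[OF A'] by simp
  finally obtain c where c: "c \<in> generate G A'" and cB: "conjug G v ` B = conjug G c ` A'"
    using conjugate_special_subgroups[OF A' B v] by blast
  have cc: "c \<in> carrier G"
    using c generate_closed[OF A'] by blast
  define d where "d = conjug G u c"
  have d: "d \<in> generate G A"
    using Au c by (simp add: d_def)
  have dc: "d \<in> carrier G" and gc: "g \<in> carrier G"
    using d g generate_incl[OF A] by auto
  have "conjug G u' ` B = conjug G u ` conjug G v ` B"
    using u v B gens_closed by (simp add: uv conjug_image_conjug)
  also have "\<dots> = conjug G (u \<otimes> c) ` A'"
    using u cc A' gens_closed by (simp add: cB conjug_image_conjug)
  also have "u \<otimes> c = d \<otimes> u"
    using u cc by (simp add: d_def conjug_def m_assoc)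
  also have "conjug G (d \<otimes> u) ` A' = conjug G d ` conjug G g ` A"
    using dc u A' gens_closed by (simp add: gA[symmetric] conjug_image_conjug)
  also have "\<dots> = conjug G (d \<otimes> g) ` A"
    using dc gc A by (simp add: conjug_image_conjug)
  finally show ?thesis
    using d g generate_is_subgroup[OF A] by (blast intro: subgroup.m_closed)
qed

end

theorem lemma7p7:
  fixes G :: "('a, 'b) monoid_scheme"
  assumes "coxeter_system G S" and "finite S"
    and "coxeter_system G S'" and "S' \<subseteq> conj_closure G S"
    and "simplex G S A" and "irreducible_set G A"
    and "simplex G S' A'" and "irreducible_set G A'"
    and "simplex G S' Ab'" and "irreducible_set G Ab'"
    and "u \<in> carrier G" and "ub \<in> carrier G"
    and "generate G A = conjug G u ` generate G A'"
    and "generate G A = conjug G ub ` generate G Ab'"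
    and "pair_iso G A A' \<alpha>" and "pair_iso G A Ab' \<alpha>b"
  shows "inner_by_graph G A (\<lambda>x. conjug G u (\<alpha> x)) \<longleftrightarrow>
         inner_by_graph G A (\<lambda>x. conjug G ub (\<alpha>b x))"
proof -
  interpret coxeter G S'
    by (rule coxeter.intro) fact
  have A: "A \<subseteq> carrier G"
    using assms(5) coxeter.gens_closed[OF coxeter.intro[OF assms(1)]] by (auto simp: simplex_def)
  have A': "A' \<subseteq> S'" and Ab': "Ab' \<subseteq> S'"
    using assms(7,9) by (simp_all add: simplex_def)
  then have A'_car: "A' \<subseteq> carrier G" and Ab'_car: "Ab' \<subseteq> carrier G"
    using gens_closed by auto
  have "inner_by_graph G A (\<lambda>x. conjug G u (\<alpha> x)) \<longleftrightarrow>
      (\<exists>g\<in>generate G A. conjug G u ` A' = conjug G g ` A)"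
    by (rule inner_by_graph_iff_conjugate_generators[OF A A'_car assms(11,13,15)])
  also have "\<dots> \<longleftrightarrow> (\<exists>g\<in>generate G A. conjug G ub ` Ab' = conjug G g ` A)"
    using conjugate_generators_transfer[OF A A' Ab' assms(11,12,13,14)]
      conjugate_generators_transfer[OF A Ab' A' assms(12,11,14,13)] by blast
  also have "\<dots> \<longleftrightarrow> inner_by_graph G A (\<lambda>x. conjug G ub (\<alpha>b x))"
    by (rule inner_by_graph_iff_conjugate_generators[OF A Ab'_car assms(12,14,16), symmetric])
  finally show ?thesis .
qed

end
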